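(* Let $v \ge 240$ be an integer. Then \[ \beta(4,v,4) \le \left\lfloor \frac{4v-10}{3} \right\rfloor, \] and \[ \beta(4,v,4) \ge \begin{cases} \frac{4v-21}{3} & \text{if } v \equiv 0 \pmod 3,\\ \frac{4v-13}{3} & \text{if } v \equiv 1 \pmod 3,\\ \frac{4v-17}{3} & \text{if } v \equiv 2 \pmod 3. \end{cases} \]
   Context: For integers $v \ge k \ge 2$, a $(v,k)$-packing is a pair $(X,\mathcal{B})$ where $X$ is a set of $v$ points and $\mathcal{B}$ is a set of $k$-subsets of $X$ (blocks) such that every pair of distinct points lies in at most one block. A partial parallel class (PPC) is a set of pairwise disjoint blocks; its size is the number of blocks. A PPC of size $\rho$ is maximum if the packing has no PPC of size $\rho+1$. $\beta(\rho,v,k)$ denotes the maximum number of blocks in a $(v,k)$-packing in which the maximum PPC has size $\rho$. *)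

theory Defs
  imports Complex_Main
begin

definition packing :: "'a set \<Rightarrow> nat \<Rightarrow> 'a set set \<Rightarrow> bool" where
  "packing X k \<B> \<longleftrightarrow>
     (\<forall>B\<in>\<B>. B \<subseteq> X \<and> card B = k) \<and>
     (\<forall>x\<in>X. \<forall>y\<in>X. x \<noteq> y \<longrightarrow> card {B\<in>\<B>. x \<in> B \<and> y \<in> B} \<le> 1)"

definition ppc :: "'a set set \<Rightarrow> 'a set set \<Rightarrow> bool" where
  "ppc \<B> P \<longleftrightarrow> P \<subseteq> \<B> \<and> (\<forall>B\<in>P. \<forall>C\<in>P. B \<noteq> C \<longrightarrow> B \<inter> C = {})"

definition max_ppc_size :: "'a set set \<Rightarrow> nat \<Rightarrow> bool" where
  "max_ppc_size \<B> \<rho> \<longleftrightarrow>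
     (\<exists>P. ppc \<B> P \<and> card P = \<rho>) \<and> \<not> (\<exists>P. ppc \<B> P \<and> card P = \<rho> + 1)"

definition beta :: "nat \<Rightarrow> nat \<Rightarrow> nat \<Rightarrow> nat" where
  "beta \<rho> v k = Max {card \<B> | \<B>. packing {..<v} k \<B> \<and> max_ppc_size \<B> \<rho>}"

end

theory Submission
  imports Defs "HOL-Number_Theory.Cong"
begin

(*
  Upper bound: call a point heavy if it lies on more than 16 blocks. Heavy points can be
  completed greedily to a PPC, since each one lies on a block avoiding the at most 16 points
  used so far; hence there are s <= 4 heavy points, and the blocks avoiding them have no PPC
  of size 5 - s. Each of those blocks meets a maximum PPC among them, whose at most 4 (4 - s)
  points are light, so there are at most 64 (4 - s) such blocks. A block meeting the heavy
  points without lying inside them covers at least 3 heavy-light pairs, and distinct blocks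
  cover distinct pairs, so there are at most s (v - s) / 3 of those. Altogether
  3 b <= s (v - s) + 3 + 192 (4 - s) <= 4 v - 10 for v >= 240.

  Lower bound: for m = (v - 4) div 3 take the block {0, 1, 2, 3} and the 4 m blocks
  {j, a, a + j, a + 2 j} (j < 4, a in Z/m), whose last three entries live in three disjoint
  copies of Z/m. Any two entries determine (j, a), so this is a packing; every block meets
  {0, 1, 2, 3}, so PPCs have at most 4 blocks, and 4 are attained.
*)

definition point_degree :: "'a set set \<Rightarrow> 'a \<Rightarrow> nat" where
  "point_degree \<B> x = card {B\<in>\<B>. x \<in> B}"

lemma packing_finite:
  assumes "packing X k \<B>" "finite X"
  shows "finite \<B>"
proof -
  have "\<B> \<subseteq> Pow X" using assms(1) unfolding packing_def by blast
  then show ?thesis using assms(2) by (simp add: finite_subset)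
qed

lemma packing_block_subset:
  assumes "packing X k \<B>" "B \<in> \<B>"
  shows "B \<subseteq> X"
  using assms unfolding packing_def by blast

lemma packing_block_finite:
  assumes "packing X k \<B>" "finite X" "B \<in> \<B>"
  shows "finite B"
  using finite_subset[OF packing_block_subset[OF assms(1,3)] assms(2)] .

lemma packing_card_block:
  assumes "packing X k \<B>" "B \<in> \<B>"
  shows "card B = k"
  using assms unfolding packing_def by blast

lemma packing_pair_card_le:
  assumes "packing X k \<B>" "x \<noteq> y"
  shows "card {B\<in>\<B>. x \<in> B \<and> y \<in> B} \<le> 1"
proof (cases "x \<in> X \<and> y \<in> X")
  case True
  with assms show ?thesis unfolding packing_def by blast
next
  case False
  with assms have "{B\<in>\<B>. x \<in> B \<and> y \<in> B} = {}" using packing_block_subset by blast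
  then show ?thesis by (metis card.empty zero_le_one)
qed

lemma packing_block_eq:
  assumes "packing X k \<B>" "finite X" "B1 \<in> \<B>" "B2 \<in> \<B>"
    "x \<in> B1" "x \<in> B2" "y \<in> B1" "y \<in> B2" "x \<noteq> y"
  shows "B1 = B2"
proof -
  have fin: "finite {B\<in>\<B>. x \<in> B \<and> y \<in> B}" using packing_finite[OF assms(1,2)] by simp
  have "card {B\<in>\<B>. x \<in> B \<and> y \<in> B} \<le> Suc 0" using packing_pair_card_le[OF assms(1,9)] by simp
  then have "\<forall>B\<in>{B\<in>\<B>. x \<in> B \<and> y \<in> B}. \<forall>B'\<in>{B\<in>\<B>. x \<in> B \<and> y \<in> B}. B = B'"
    by (rule iffD1[OF card_le_Suc0_iff_eq[OF fin]])
  then show ?thesis using assms(3-8) by blast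
qed

lemma card_blocks_through_meeting_le:
  assumes "packing X k \<B>" "finite Y" "h \<notin> Y"
  shows "card {B\<in>\<B>. h \<in> B \<and> B \<inter> Y \<noteq> {}} \<le> card Y"
proof -
  have "{B\<in>\<B>. h \<in> B \<and> B \<inter> Y \<noteq> {}} = (\<Union>y\<in>Y. {B\<in>\<B>. h \<in> B \<and> y \<in> B})" by auto
  also have "card \<dots> \<le> (\<Sum>y\<in>Y. card {B\<in>\<B>. h \<in> B \<and> y \<in> B})" using assms(2) by (rule card_UN_le)
  also have "\<dots> \<le> (\<Sum>y\<in>Y. 1)"
  proof (rule sum_mono)
    fix y assume "y \<in> Y"
    with assms(3) have "h \<noteq> y" by blast
    then show "card {B\<in>\<B>. h \<in> B \<and> y \<in> B} \<le> 1" by (rule packing_pair_card_le[OF assms(1)])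
  qed
  finally show ?thesis by simp
qed

lemma ppc_subset: "ppc \<B> P \<Longrightarrow> Q \<subseteq> P \<Longrightarrow> ppc \<B> Q"
  unfolding ppc_def by blast

lemma ppc_insert: "ppc \<B> P \<Longrightarrow> C \<in> \<B> \<Longrightarrow> C \<inter> \<Union>P = {} \<Longrightarrow> ppc \<B> (insert C P)"
  unfolding ppc_def by blast

lemma ppc_finite: "ppc \<B> P \<Longrightarrow> finite \<B> \<Longrightarrow> finite P"
  unfolding ppc_def using finite_subset by blast

lemma card_Union_ppc_le:
  assumes "packing X k \<B>" "ppc \<B> P"
  shows "card (\<Union>P) \<le> k * card P"
proof -
  have "card (\<Union>P) \<le> sum card P" by (rule card_Union_le_sum_card)
  also have "\<dots> = (\<Sum>B\<in>P. k)"
  proof (rule sum.cong)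
    fix B assume "B \<in> P"
    with assms(2) have "B \<in> \<B>" unfolding ppc_def by blast
    then show "card B = k" by (rule packing_card_block[OF assms(1)])
  qed simp
  also have "\<dots> = k * card P" by simp
  finally show ?thesis .
qed

lemma ppc_card_le_of_no_ppc:
  assumes "\<not> (\<exists>P. ppc \<B> P \<and> card P = r + 1)" "ppc \<B> Q"
  shows "card Q \<le> r"
proof (rule ccontr)
  assume "\<not> card Q \<le> r"
  then have "r + 1 \<le> card Q" by simp
  then obtain P where "P \<subseteq> Q" "card P = r + 1" by (rule obtain_subset_with_card_n)
  with assms show False using ppc_subset by blast
qed

lemma ppc_card_le_transversal:
  assumes "ppc \<B> P" "finite T" "\<And>B. B \<in> P \<Longrightarrow> B \<inter> T \<noteq> {}"
  shows "card P \<le> card T"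
proof -
  define pick where "pick B = (SOME t. t \<in> B \<inter> T)" for B
  have pick: "pick B \<in> B \<inter> T" if "B \<in> P" for B
    unfolding pick_def some_in_eq using assms(3)[OF that] .
  have "inj_on pick P"
  proof (rule inj_onI)
    fix B B' assume B: "B \<in> P" "B' \<in> P" "pick B = pick B'"
    then have "pick B \<in> B \<inter> B'" using pick[OF B(1)] pick[OF B(2)] by simp
    then show "B = B'" using assms(1) B(1,2) unfolding ppc_def by blast
  qed
  then show ?thesis using pick assms(2) by (intro card_inj_on_le) auto
qed

lemma ppc_maximum_exists:
  assumes "finite \<B>"
  obtains P where "ppc \<B> P" "\<And>Q. ppc \<B> Q \<Longrightarrow> card Q \<le> card P"
proof -
  have "ppc \<B> {}" unfolding ppc_def by simp
  moreover have "\<forall>Q. ppc \<B> Q \<longrightarrow> card Q < card \<B> + 1"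
  proof (intro allI impI)
    fix Q assume "ppc \<B> Q"
    then have "Q \<subseteq> \<B>" unfolding ppc_def by blast
    then show "card Q < card \<B> + 1" using card_mono[OF assms] by (simp add: le_imp_less_Suc)
  qed
  ultimately show ?thesis using that ex_has_greatest_nat[of "ppc \<B>" "{}" card] by blast
qed

lemma block_through_avoiding:
  assumes pk: "packing X k \<B>" and fX: "finite X" and fY: "finite Y" and hY: "h \<notin> Y"
    and deg: "card Y < point_degree \<B> h"
  obtains C where "C \<in> \<B>" "h \<in> C" "C \<inter> Y = {}"
proof -
  have fin: "finite {B\<in>\<B>. h \<in> B \<and> B \<inter> Y \<noteq> {}}" using packing_finite[OF pk fX] by simp
  have less: "card {B\<in>\<B>. h \<in> B \<and> B \<inter> Y \<noteq> {}} < card {B\<in>\<B>. h \<in> B}"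
    using le_less_trans[OF card_blocks_through_meeting_le[OF pk fY hY] deg[unfolded point_degree_def]] .
  have "\<not> {B\<in>\<B>. h \<in> B} \<subseteq> {B\<in>\<B>. h \<in> B \<and> B \<inter> Y \<noteq> {}}"
  proof
    assume "{B\<in>\<B>. h \<in> B} \<subseteq> {B\<in>\<B>. h \<in> B \<and> B \<inter> Y \<noteq> {}}"
    from leD[OF card_mono[OF fin this]] less show False by contradiction
  qed
  then show ?thesis using that by blast
qed

definition high_degree_points :: "'a set \<Rightarrow> 'a set set \<Rightarrow> nat \<Rightarrow> 'a set" where
  "high_degree_points X \<B> d = {x\<in>X. d < point_degree \<B> x}"

lemma ppc_extend_by_high_degree_points:
  assumes pk: "packing X k \<B>" and fX: "finite X" and k: "0 < k"
    and S: "S \<subseteq> high_degree_points X \<B> (k * \<rho>)" and Q: "ppc \<B> Q" "\<forall>B\<in>Q. B \<inter> S = {}"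
    and card: "card Q + card S \<le> \<rho> + 1"
  shows "\<exists>Q'. ppc \<B> Q' \<and> card Q' = card Q + card S"
proof -
  have "S \<subseteq> X" using S unfolding high_degree_points_def by blast
  then have "finite S" using fX by (rule finite_subset)
  from this S Q card show ?thesis
  proof (induction S arbitrary: Q rule: finite_induct)
    case empty
    then show ?case by auto
  next
    case (insert h S)
    have fQ: "finite Q" using ppc_finite[OF insert.prems(2) packing_finite[OF pk fX]] .
    define Y where "Y = \<Union>Q \<union> S"
    have "finite B" if "B \<in> Q" for B
      using that insert.prems(2) packing_block_finite[OF pk fX] unfolding ppc_def by blast
    then have fY: "finite Y" unfolding Y_def using insert.hyps(1) fQ by blast
    have hY: "h \<notin> Y" unfolding Y_def using insert.prems(3) insert.hyps(2) by blast
    have "card Y \<le> k * card Q + card S"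
      using card_Un_le[of "\<Union>Q" S] card_Union_ppc_le[OF pk insert.prems(2)] unfolding Y_def by linarith
    also have "\<dots> \<le> k * (card Q + card S)" using k by (simp add: algebra_simps)
    also have "\<dots> \<le> k * \<rho>" using insert.prems(4) insert.hyps by simp
    also have "\<dots> < point_degree \<B> h" using insert.prems(1) unfolding high_degree_points_def by blast
    finally obtain C where C: "C \<in> \<B>" "h \<in> C" "C \<inter> Y = {}"
      using block_through_avoiding[OF pk fX fY hY] by blast
    have CQ: "C \<notin> Q" using C(2) insert.prems(3) by blast
    have "S \<subseteq> high_degree_points X \<B> (k * \<rho>)" using insert.prems(1) by simp
    moreover have "ppc \<B> (insert C Q)" using ppc_insert[OF insert.prems(2) C(1)] C(3) unfolding Y_def by blast
    moreover have "\<forall>B\<in>insert C Q. B \<inter> S = {}" using insert.prems(3) C(3) unfolding Y_def by blast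
    moreover have "card (insert C Q) + card S \<le> \<rho> + 1" using insert.prems(4) insert.hyps fQ CQ by simp
    ultimately have "\<exists>Q'. ppc \<B> Q' \<and> card Q' = card (insert C Q) + card S"
      by (rule insert.IH)
    then show ?case using fQ CQ insert.hyps by simp
  qed
qed

lemma card_high_degree_points_le:
  assumes pk: "packing X k \<B>" and fX: "finite X" and k: "0 < k"
    and noP: "\<not> (\<exists>P. ppc \<B> P \<and> card P = \<rho> + 1)"
  shows "card (high_degree_points X \<B> (k * \<rho>)) \<le> \<rho>"
proof (rule ccontr)
  assume "\<not> card (high_degree_points X \<B> (k * \<rho>)) \<le> \<rho>"
  then obtain S where S: "S \<subseteq> high_degree_points X \<B> (k * \<rho>)" "card S = \<rho> + 1"
    by (metis obtain_subset_with_card_n not_less_eq_eq Suc_eq_plus1)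
  have "ppc \<B> {}" unfolding ppc_def by simp
  with S show False
    using ppc_extend_by_high_degree_points[OF pk fX k S(1), of "{}"] noP by simp
qed

lemma no_ppc_avoiding_high_degree_points:
  assumes pk: "packing X k \<B>" and fX: "finite X" and k: "0 < k"
    and noP: "\<not> (\<exists>P. ppc \<B> P \<and> card P = \<rho> + 1)"
    and H: "H = high_degree_points X \<B> (k * \<rho>)"
  shows "\<not> (\<exists>Q. ppc {B\<in>\<B>. B \<inter> H = {}} Q \<and> card Q = \<rho> - card H + 1)"
proof
  assume "\<exists>Q. ppc {B\<in>\<B>. B \<inter> H = {}} Q \<and> card Q = \<rho> - card H + 1"
  then obtain Q where Q: "ppc {B\<in>\<B>. B \<inter> H = {}} Q" "card Q = \<rho> - card H + 1" by blast
  have "ppc \<B> Q" "\<forall>B\<in>Q. B \<inter> H = {}" using Q(1) unfolding ppc_def by auto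
  moreover have "card Q + card H = \<rho> + 1"
    using Q(2) card_high_degree_points_le[OF pk fX k noP] H by simp
  ultimately show False
    using ppc_extend_by_high_degree_points[OF pk fX k, of H \<rho> Q] H noP by auto
qed

lemma card_low_degree_blocks_le:
  assumes pk: "packing X k \<B>" and fX: "finite X" and k: "0 < k" and FB: "F \<subseteq> \<B>"
    and deg: "\<forall>B\<in>F. \<forall>x\<in>B. point_degree \<B> x \<le> d"
    and noP: "\<not> (\<exists>P. ppc F P \<and> card P = r + 1)"
  shows "card F \<le> k * d * r"
proof -
  have fB: "finite \<B>" using packing_finite[OF pk fX] .
  then have fF: "finite F" using FB by (simp add: finite_subset)
  obtain P where P: "ppc F P" and maxP: "\<And>Q. ppc F Q \<Longrightarrow> card Q \<le> card P"
    using ppc_maximum_exists[OF fF] by blast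
  have fP: "finite P" using ppc_finite[OF P fF] .
  have PB: "ppc \<B> P" using P FB unfolding ppc_def by blast
  have meets: "C \<inter> \<Union>P \<noteq> {}" if C: "C \<in> F" for C
  proof
    assume disj: "C \<inter> \<Union>P = {}"
    have "card C = k" using C FB by (intro packing_card_block[OF pk]) blast
    with k have "C \<noteq> {}" by auto
    then have "C \<notin> P" using disj by blast
    moreover have "ppc F (insert C P)" using ppc_insert[OF P C disj] .
    ultimately show False using maxP[of "insert C P"] fP by simp
  qed
  have fU: "finite (\<Union>P)"
    using fP PB packing_block_finite[OF pk fX] unfolding ppc_def by blast
  have "F \<subseteq> (\<Union>x\<in>\<Union>P. {B\<in>\<B>. x \<in> B})" using meets FB by blast
  moreover have "finite (\<Union>x\<in>\<Union>P. {B\<in>\<B>. x \<in> B})" using fB by (rule finite_subset[rotated]) blast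
  ultimately have "card F \<le> card (\<Union>x\<in>\<Union>P. {B\<in>\<B>. x \<in> B})" by (simp add: card_mono)
  also have "\<dots> \<le> (\<Sum>x\<in>\<Union>P. point_degree \<B> x)"
    unfolding point_degree_def using fU by (rule card_UN_le)
  also have "\<dots> \<le> (\<Sum>x\<in>\<Union>P. d)"
    using deg P unfolding ppc_def by (intro sum_mono) blast
  also have "\<dots> = d * card (\<Union>P)" by simp
  also have "\<dots> \<le> d * (k * card P)" using card_Union_ppc_le[OF pk PB] by simp
  also have "\<dots> \<le> k * d * r" using ppc_card_le_of_no_ppc[OF noP P] by simp
  finally show ?thesis .
qed

lemma pred_le_mult_diff:
  fixes i k :: nat
  assumes "1 \<le> i" "i < k"
  shows "k - 1 \<le> i * (k - i)"
proof -
  obtain j where k: "k = Suc (i + j)" using less_imp_Suc_add[OF assms(2)] by blast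
  have "1 * j \<le> i * j" using assms(1) by (rule mult_le_mono1)
  then show ?thesis unfolding k by simp
qed

lemma card_crossing_pairs_ge:
  assumes "finite B" "card B = k" "B \<inter> H \<noteq> {}" "\<not> B \<subseteq> H"
  shows "k - 1 \<le> card ((B \<inter> H) \<times> (B - H))"
proof -
  have "B \<inter> H \<subset> B" using assms(4) by blast
  then have "1 \<le> card (B \<inter> H)" "card (B \<inter> H) < card B"
    using assms(1,3) by (auto simp: Suc_le_eq card_gt_0_iff intro: psubset_card_mono)
  moreover have "card ((B \<inter> H) \<times> (B - H)) = card (B \<inter> H) * (card B - card (B \<inter> H))"
    using assms(1) by (simp add: card_cartesian_product card_Diff_subset_Int)
  ultimately show ?thesis using pred_le_mult_diff assms(2) by simp
qed

lemma card_crossing_blocks_le: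
  assumes pk: "packing X k \<B>" and fX: "finite X" and HX: "H \<subseteq> X"
  shows "(k - 1) * card {B\<in>\<B>. B \<inter> H \<noteq> {} \<and> \<not> B \<subseteq> H} \<le> card H * (card X - card H)"
proof -
  define M where "M = {B\<in>\<B>. B \<inter> H \<noteq> {} \<and> \<not> B \<subseteq> H}"
  define pairs where "pairs B = (B \<inter> H) \<times> (B - H)" for B
  have fH: "finite H" using HX fX by (rule finite_subset)
  have fM: "finite M" unfolding M_def using packing_finite[OF pk fX] by simp
  have fin: "finite B" if "B \<in> M" for B
    using that packing_block_finite[OF pk fX] unfolding M_def by blast
  have disjoint: "pairs B1 \<inter> pairs B2 = {}" if B: "B1 \<in> M" "B2 \<in> M" "B1 \<noteq> B2" for B1 B2
  proof (rule ccontr)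
    assume "pairs B1 \<inter> pairs B2 \<noteq> {}"
    then obtain h y where "h \<in> B1" "h \<in> B2" "y \<in> B1" "y \<in> B2" "h \<noteq> y"
      unfolding pairs_def by blast
    with B show False using packing_block_eq[OF pk fX, of B1 B2 h y] unfolding M_def by blast
  qed
  have "(k - 1) * card M = (\<Sum>B\<in>M. k - 1)" by simp
  also have "\<dots> \<le> (\<Sum>B\<in>M. card (pairs B))"
  proof (rule sum_mono)
    fix B assume B: "B \<in> M"
    have "card B = k" using B unfolding M_def by (intro packing_card_block[OF pk]) blast
    with fin[OF B] B show "k - 1 \<le> card (pairs B)"
      unfolding pairs_def M_def by (intro card_crossing_pairs_ge) blast+
  qed
  also have "\<dots> = card (\<Union>B\<in>M. pairs B)"
    using fM fin disjoint unfolding pairs_def by (intro card_UN_disjoint[symmetric]) auto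
  also have "\<dots> \<le> card (H \<times> (X - H))"
  proof (rule card_mono)
    show "finite (H \<times> (X - H))" using fH fX by simp
    show "(\<Union>B\<in>M. pairs B) \<subseteq> H \<times> (X - H)"
      using packing_block_subset[OF pk] unfolding pairs_def M_def by blast
  qed
  also have "\<dots> = card H * (card X - card H)"
    using fH HX by (simp add: card_cartesian_product card_Diff_subset)
  finally show ?thesis unfolding M_def .
qed

lemma card_blocks_inside_le:
  assumes pk: "packing X k \<B>" and fH: "finite H" and Hk: "card H \<le> k"
  shows "card {B\<in>\<B>. B \<subseteq> H} \<le> 1"
proof -
  have "B = H" if "B \<in> \<B>" "B \<subseteq> H" for B
    using card_subset_eq[OF fH that(2)] card_mono[OF fH that(2)] Hk packing_card_block[OF pk that(1)]
    by linarith
  then have "{B\<in>\<B>. B \<subseteq> H} \<subseteq> {H}" by blast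
  then have "card {B\<in>\<B>. B \<subseteq> H} \<le> card {H}" by (intro card_mono) simp_all
  then show ?thesis by simp
qed

lemma packing_card_bound:
  assumes pk: "packing X k \<B>" and fX: "finite X" and k: "0 < k" and \<rho>k: "\<rho> \<le> k"
    and noP: "\<not> (\<exists>P. ppc \<B> P \<and> card P = \<rho> + 1)"
  obtains s where "s \<le> \<rho>"
    "(k - 1) * card \<B> \<le> s * (card X - s) + (k - 1) + (k - 1) * (k * (k * \<rho>) * (\<rho> - s))"
proof -
  define H where "H = high_degree_points X \<B> (k * \<rho>)"
  define s where "s = card H"
  have fH: "finite H" and HX: "H \<subseteq> X" unfolding H_def high_degree_points_def using fX by auto
  have s\<rho>: "s \<le> \<rho>" using card_high_degree_points_le[OF pk fX k noP] unfolding s_def H_def .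
  define F where "F = {B\<in>\<B>. B \<inter> H = {}}"
  define M where "M = {B\<in>\<B>. B \<inter> H \<noteq> {} \<and> \<not> B \<subseteq> H}"
  define I where "I = {B\<in>\<B>. B \<subseteq> H}"
  have low_degree: "\<forall>B\<in>F. \<forall>x\<in>B. point_degree \<B> x \<le> k * \<rho>"
    using packing_block_subset[OF pk] unfolding F_def H_def high_degree_points_def by fastforce
  have F: "card F \<le> k * (k * \<rho>) * (\<rho> - s)"
    using no_ppc_avoiding_high_degree_points[OF pk fX k noP H_def] low_degree
    unfolding F_def s_def by (intro card_low_degree_blocks_le[OF pk fX k]) auto
  have M: "(k - 1) * card M \<le> s * (card X - s)"
    unfolding s_def M_def using card_crossing_blocks_le[OF pk fX HX] .
  have I: "card I \<le> 1"
    using card_blocks_inside_le[OF pk fH] s\<rho> \<rho>k unfolding s_def I_def by simp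
  have "\<B> = M \<union> I \<union> F" unfolding M_def I_def F_def by blast
  then have "card \<B> \<le> card M + card I + card F"
    using card_Un_le[of "M \<union> I" F] card_Un_le[of M I] by simp
  then have "(k - 1) * card \<B> \<le> (k - 1) * card M + (k - 1) * card I + (k - 1) * card F"
    using mult_le_mono2 by (metis distrib_left)
  also have "\<dots> \<le> s * (card X - s) + (k - 1) + (k - 1) * (k * (k * \<rho>) * (\<rho> - s))"
    using add_mono[OF add_mono[OF M mult_le_mono2[OF I]] mult_le_mono2[OF F]] by simp
  finally have "(k - 1) * card \<B> \<le> s * (card X - s) + (k - 1) + (k - 1) * (k * (k * \<rho>) * (\<rho> - s))" .
  with s\<rho> show ?thesis by (rule that)
qed

definition cyclic_block :: "nat \<Rightarrow> nat \<Rightarrow> nat \<Rightarrow> nat set" where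
  "cyclic_block m j a = {j, 4 + a, 4 + m + (a + j) mod m, 4 + 2*m + (a + 2*j) mod m}"

definition cyclic_family :: "nat \<Rightarrow> nat set set" where
  "cyclic_family m = insert {0, 1, 2, 3} ((\<lambda>(j, a). cyclic_block m j a) ` ({..<4} \<times> {..<m}))"

lemma
  assumes "j < 4" "a < m"
  shows cyclic_block_inter_lessThan_4: "cyclic_block m j a \<inter> {..<4} = {j}"
    and cyclic_block_inter_first_copy: "cyclic_block m j a \<inter> {4..<4 + m} = {4 + a}"
    and card_cyclic_block: "card (cyclic_block m j a) = 4"
    and cyclic_block_subset: "cyclic_block m j a \<subseteq> {..<4 + 3*m}"
proof -
  define c2 c3 where "c2 = (a + j) mod m" "c3 = (a + 2*j) mod m"
  have "c2 < m" "c3 < m" using assms(2) unfolding c2_c3_def by auto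
  then show "cyclic_block m j a \<inter> {..<4} = {j}" "cyclic_block m j a \<inter> {4..<4 + m} = {4 + a}"
    "card (cyclic_block m j a) = 4" "cyclic_block m j a \<subseteq> {..<4 + 3*m}"
    using assms unfolding cyclic_block_def c2_c3_def[symmetric] by auto
qed

lemma transversal_common_point:
  fixes x m :: nat
  assumes "x \<in> {p0, 4 + p1, 4 + m + p2, 4 + 2*m + p3}" "x \<in> {q0, 4 + q1, 4 + m + q2, 4 + 2*m + q3}"
    "p0 < 4" "q0 < 4" "p1 < m" "q1 < m" "p2 < m" "q2 < m"
  shows "(x = p0 \<and> p0 = q0) \<or> (x = 4 + p1 \<and> p1 = q1) \<or> (x = 4 + m + p2 \<and> p2 = q2)
    \<or> (x = 4 + 2*m + p3 \<and> p3 = q3)"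
  using assms(1,2) unfolding insert_iff empty_iff simp_thms by (elim disjE; use assms(3-8) in simp)

lemma cyclic_block_common_point:
  assumes "x \<in> cyclic_block m j a" "x \<in> cyclic_block m j' a'" "j < 4" "j' < 4" "a < m" "a' < m"
  shows "(x = j \<and> j = j') \<or> (x = 4 + a \<and> a = a')
    \<or> (x = 4 + m + (a + j) mod m \<and> [a + j = a' + j'] (mod m))
    \<or> (x = 4 + 2*m + (a + 2*j) mod m \<and> [a + 2*j = a' + 2*j'] (mod m))"
proof -
  have "(a + j) mod m < m" "(a' + j') mod m < m" using assms(5) by simp_all
  from transversal_common_point[OF assms(1,2)[unfolded cyclic_block_def] assms(3-6) this]
  show ?thesis unfolding cong_def .
qed

lemma cong_add_right_imp_eq:
  fixes a a' c m :: nat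
  assumes "[a + c = a' + c] (mod m)" "a < m" "a' < m"
  shows "a = a'"
  using assms by (simp add: cong_add_rcancel_nat cong_less_modulus_unique_nat)

lemma cyclic_coords_determine:
  fixes j j' a a' m :: nat
  assumes "j < 4" "j' < 4" "a < m" "a' < m" "6 < m"
  shows "j = j' \<Longrightarrow> [a + j = a' + j'] (mod m) \<or> [a + 2*j = a' + 2*j'] (mod m) \<Longrightarrow> a = a'"
    and "a = a' \<Longrightarrow> [a + j = a' + j'] (mod m) \<or> [a + 2*j = a' + 2*j'] (mod m) \<Longrightarrow> j = j'"
    and "[a + j = a' + j'] (mod m) \<Longrightarrow> [a + 2*j = a' + 2*j'] (mod m) \<Longrightarrow> j = j'"
proof -
  show "a = a'" if "j = j'" "[a + j = a' + j'] (mod m) \<or> [a + 2*j = a' + 2*j'] (mod m)"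
    using that(2) unfolding that(1)
    by (elim disjE) (use cong_add_right_imp_eq assms(3,4) in blast)+
  show "j = j'" if "a = a'" "[a + j = a' + j'] (mod m) \<or> [a + 2*j = a' + 2*j'] (mod m)"
  proof -
    have "[j = j'] (mod m) \<or> [2*j = 2*j'] (mod m)"
      using that(2) unfolding that(1) cong_add_lcancel_nat .
    moreover have "j < m" "j' < m" "2*j < m" "2*j' < m" using assms(1,2,5) by simp_all
    ultimately show ?thesis by (auto dest: cong_less_modulus_unique_nat)
  qed
  show "j = j'" if "[a + j = a' + j'] (mod m)" "[a + 2*j = a' + 2*j'] (mod m)"
  proof -
    have "a + 2*j + (a' + j') = (a + a' + j + j') + j" "a' + 2*j' + (a + j) = (a + a' + j + j') + j'"
      by linarith+
    with cong_add[OF that(2) cong_sym[OF that(1)]]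
    have "[(a + a' + j + j') + j = (a + a' + j + j') + j'] (mod m)" by simp
    then have "[j = j'] (mod m)" by (rule iffD1[OF cong_add_lcancel_nat])
    moreover have "j < m" "j' < m" using assms(1,2,5) by simp_all
    ultimately show ?thesis by (rule cong_less_modulus_unique_nat)
  qed
qed

lemma cyclic_block_eq_of_two_common_points:
  assumes "x \<in> cyclic_block m j a" "x \<in> cyclic_block m j' a'"
    "y \<in> cyclic_block m j a" "y \<in> cyclic_block m j' a'" "x \<noteq> y"
    "j < 4" "j' < 4" "a < m" "a' < m" "6 < m"
  shows "j = j' \<and> a = a'"
  using cyclic_block_common_point[OF assms(1,2) assms(6-9)]
    cyclic_block_common_point[OF assms(3,4) assms(6-9)]
    cyclic_coords_determine[OF assms(6-10)] assms(5)
  by metis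

lemma cyclic_family_cases:
  assumes "B \<in> cyclic_family m"
  obtains "B = {0, 1, 2, 3}" | j a where "j < 4" "a < m" "B = cyclic_block m j a"
  using assms unfolding cyclic_family_def by auto

lemma cyclic_family_block_eq:
  assumes "B1 \<in> cyclic_family m" "B2 \<in> cyclic_family m" "6 < m"
    "x \<in> B1" "x \<in> B2" "y \<in> B1" "y \<in> B2" "x \<noteq> y"
  shows "B1 = B2"
proof -
  have low: False if "j < 4" "a < m" "x \<in> cyclic_block m j a" "y \<in> cyclic_block m j a"
    "x \<in> {0, 1, 2, 3}" "y \<in> {0, 1, 2, 3}" for j a
  proof -
    have "x \<in> cyclic_block m j a \<inter> {..<4}" "y \<in> cyclic_block m j a \<inter> {..<4}"
      using that(3-6) by auto
    then show False using cyclic_block_inter_lessThan_4[OF that(1,2)] assms(8) by simp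
  qed
  from assms(1) show ?thesis
  proof (cases rule: cyclic_family_cases)
    case 1
    note B1 = this
    from assms(2) show ?thesis
    proof (cases rule: cyclic_family_cases)
      case 1
      with B1 show ?thesis by simp
    next
      case (2 j a)
      show ?thesis using low[OF 2(1,2)] assms(4-7) unfolding B1 2(3) by blast
    qed
  next
    case (2 j a)
    note B1 = this
    from assms(2) show ?thesis
    proof (cases rule: cyclic_family_cases)
      case 1
      show ?thesis using low[OF B1(1,2)] assms(4-7) unfolding B1(3) 1 by blast
    next
      case (2 j' a')
      have "j = j' \<and> a = a'"
        using cyclic_block_eq_of_two_common_points[of x m j a j' a' y] assms(3-8) B1 2 by blast
      then show ?thesis unfolding B1(3) 2(3) by simp
    qed
  qed
qed

lemma cyclic_family_packing:
  assumes "6 < m" "4 + 3*m \<le> v"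
  shows "packing {..<v} 4 (cyclic_family m)"
  unfolding packing_def
proof (intro conjI ballI impI)
  fix B assume B: "B \<in> cyclic_family m"
  then show "B \<subseteq> {..<v}"
  proof (cases rule: cyclic_family_cases)
    case 1
    then show ?thesis using assms(2) by auto
  next
    case (2 j a)
    then show ?thesis using cyclic_block_subset[OF 2(1,2)] assms(2) by auto
  qed
  from B show "card B = 4"
  proof (cases rule: cyclic_family_cases)
    case 1
    then show ?thesis by simp
  next
    case (2 j a)
    then show ?thesis using card_cyclic_block[OF 2(1,2)] by simp
  qed
next
  fix x y :: nat assume "x \<in> {..<v}" "y \<in> {..<v}" "x \<noteq> y"
  have fin: "finite {B \<in> cyclic_family m. x \<in> B \<and> y \<in> B}" unfolding cyclic_family_def by simp
  have "card {B \<in> cyclic_family m. x \<in> B \<and> y \<in> B} \<le> Suc 0"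
    by (rule iffD2[OF card_le_Suc0_iff_eq[OF fin]])
      (use cyclic_family_block_eq[OF _ _ assms(1) _ _ _ _ \<open>x \<noteq> y\<close>] in blast)
  then show "card {B \<in> cyclic_family m. x \<in> B \<and> y \<in> B} \<le> 1" by simp
qed

lemma card_cyclic_family: "card (cyclic_family m) = 4 * m + 1"
proof -
  have inj: "inj_on (\<lambda>(j, a). cyclic_block m j a) ({..<4} \<times> {..<m})"
  proof (rule inj_onI, clarify)
    fix j a j' a' assume h: "j < (4::nat)" "a < m" "j' < (4::nat)" "a' < m"
      "cyclic_block m j a = cyclic_block m j' a'"
    have "{j} = {j'}"
      using cyclic_block_inter_lessThan_4[OF h(1,2)] cyclic_block_inter_lessThan_4[OF h(3,4)] h(5) by simp
    moreover have "{4 + a} = {4 + a'}"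
      using cyclic_block_inter_first_copy[OF h(1,2)] cyclic_block_inter_first_copy[OF h(3,4)] h(5) by simp
    ultimately show "j = j' \<and> a = a'" by simp
  qed
  have "{0, 1, 2, 3} \<notin> (\<lambda>(j, a). cyclic_block m j a) ` ({..<4} \<times> {..<m})"
  proof
    assume "{0, 1, 2, 3} \<in> (\<lambda>(j, a). cyclic_block m j a) ` ({..<4} \<times> {..<m})"
    then obtain j a where "j < 4" "a < m" "{0, 1, 2, 3} = cyclic_block m j a" by auto
    then have eq: "{0, 1, 2, 3} \<inter> {..<4} = {j :: nat}"
      using cyclic_block_inter_lessThan_4 by simp
    have "(0 :: nat) \<in> {j}" "(1 :: nat) \<in> {j}" by (simp_all add: eq[symmetric])
    then show False by simp
  qed
  then show ?thesis
    unfolding cyclic_family_def using card_image[OF inj] by (simp add: card_cartesian_product)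
qed

lemma cyclic_family_has_ppc_4:
  assumes "9 < m"
  obtains P where "ppc (cyclic_family m) P" "card P = 4"
proof -
  define P where "P = (\<lambda>j. cyclic_block m j j) ` {..<4}"
  have diag: "cyclic_block m j j = {j, 4 + j, 4 + m + 2*j, 4 + 2*m + 3*j}" if "j < 4" for j
    using that assms unfolding cyclic_block_def by (simp add: algebra_simps)
  have disjoint: "cyclic_block m j j \<inter> cyclic_block m j' j' = {}" if "j < 4" "j' < 4" "j \<noteq> j'" for j j'
    unfolding diag[OF that(1)] diag[OF that(2)] using that assms by auto
  have "ppc (cyclic_family m) P"
    unfolding ppc_def
  proof (intro conjI ballI impI subsetI)
    fix B assume "B \<in> P"
    then obtain j where "j < 4" "B = cyclic_block m j j" unfolding P_def by blast
    then show "B \<in> cyclic_family m"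
      unfolding cyclic_family_def by (intro insertI2 rev_image_eqI[of "(j, j)"]) (use assms in auto)
  next
    fix B C assume "B \<in> P" "C \<in> P" "B \<noteq> C"
    then obtain j j' where j: "j < 4" "j' < 4" and BC: "B = cyclic_block m j j" "C = cyclic_block m j' j'"
      unfolding P_def by blast
    with \<open>B \<noteq> C\<close> have "j \<noteq> j'" by auto
    then show "B \<inter> C = {}" unfolding BC by (rule disjoint[OF j])
  qed
  moreover have "inj_on (\<lambda>j. cyclic_block m j j) {..<4}"
  proof (rule inj_onI)
    fix j j' assume "j \<in> {..<4}" "j' \<in> {..<4}" and eq: "cyclic_block m j j = cyclic_block m j' j'"
    then have j: "j < 4" "j < m" "j' < 4" "j' < m" using assms by simp_all
    have "{j} = cyclic_block m j j \<inter> {..<4}" using cyclic_block_inter_lessThan_4[OF j(1,2)] ..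
    also have "\<dots> = {j'}" unfolding eq by (rule cyclic_block_inter_lessThan_4[OF j(3,4)])
    finally show "j = j'" by simp
  qed
  then have "card P = 4" unfolding P_def by (simp add: card_image)
  ultimately show ?thesis by (rule that)
qed

lemma cyclic_family_ppc_card_le:
  assumes "ppc (cyclic_family m) P"
  shows "card P \<le> 4"
proof (rule ppc_card_le_transversal[OF assms, of "{..<4}", simplified])
  fix B assume "B \<in> P"
  then have "B \<in> cyclic_family m" using assms unfolding ppc_def by blast
  then show "B \<inter> {..<4} \<noteq> {}"
  proof (cases rule: cyclic_family_cases)
    case 1
    then show ?thesis by simp
  next
    case (2 j a)
    then show ?thesis using cyclic_block_inter_lessThan_4[OF 2(1,2)] by simp
  qed
qed

lemma cyclic_family_max_ppc_size:
  assumes "9 < m"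
  shows "max_ppc_size (cyclic_family m) 4"
  unfolding max_ppc_size_def
proof
  obtain P where "ppc (cyclic_family m) P" "card P = 4" using cyclic_family_has_ppc_4[OF assms] .
  then show "\<exists>P. ppc (cyclic_family m) P \<and> card P = 4" by blast
  show "\<not> (\<exists>P. ppc (cyclic_family m) P \<and> card P = 4 + 1)"
  proof
    assume "\<exists>P. ppc (cyclic_family m) P \<and> card P = 4 + 1"
    then obtain P where "ppc (cyclic_family m) P" "card P = 4 + 1" by blast
    then show False using cyclic_family_ppc_card_le[of m P] by simp
  qed
qed

lemma finite_packing_sizes:
  fixes v :: nat
  shows "finite {card \<B> | \<B>. packing {..<v} k \<B> \<and> P \<B>}"
proof -
  have "{\<B>. packing {..<v} k \<B> \<and> P \<B>} \<subseteq> Pow (Pow {..<v})"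
    using packing_block_subset by blast
  then have "finite {\<B>. packing {..<v} k \<B> \<and> P \<B>}" by (rule finite_subset) simp
  then show ?thesis by (rule finite_image_set)
qed

lemma card_le_beta:
  assumes "packing {..<v} k \<B>" "max_ppc_size \<B> \<rho>"
  shows "card \<B> \<le> beta \<rho> v k"
  unfolding beta_def using assms by (intro Max_ge[OF finite_packing_sizes]) blast

lemma beta_attained:
  assumes "packing {..<v} k \<B>\<^sub>0" "max_ppc_size \<B>\<^sub>0 \<rho>"
  obtains \<B> where "packing {..<v} k \<B>" "max_ppc_size \<B> \<rho>" "beta \<rho> v k = card \<B>"
proof -
  have "beta \<rho> v k \<in> {card \<B> | \<B>. packing {..<v} k \<B> \<and> max_ppc_size \<B> \<rho>}"
    unfolding beta_def using assms by (intro Max_in[OF finite_packing_sizes]) blast+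
  then show ?thesis using that by blast
qed

lemma packing_4_4_card_bound:
  fixes v :: nat
  assumes "packing {..<v} 4 \<B>" "max_ppc_size \<B> 4" "240 \<le> v"
  shows "3 * card \<B> + 10 \<le> 4 * v"
proof -
  have noP: "\<not> (\<exists>P. ppc \<B> P \<and> card P = 4 + 1)" using assms(2) unfolding max_ppc_size_def by blast
  obtain s where "s \<le> 4" and bound:
    "(4 - 1) * card \<B> \<le> s * (card {..<v} - s) + (4 - 1) + (4 - 1) * (4 * (4 * 4) * (4 - s))"
    by (rule packing_card_bound[OF assms(1) finite_lessThan zero_less_numeral order_refl noP])
  then have "s = 0 \<or> s = 1 \<or> s = 2 \<or> s = 3 \<or> s = 4" by linarith
  then show ?thesis using bound assms(3) by (elim disjE) (simp_all add: algebra_simps)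
qed

lemma le_nat_floor_third:
  assumes "3 * n + 10 \<le> 4 * v"
  shows "n \<le> nat \<lfloor>(4 * real v - 10) / 3\<rfloor>"
proof -
  have "real (3 * n + 10) \<le> real (4 * v)" using assms by (simp only: of_nat_le_iff)
  then have "3 * real n + 10 \<le> 4 * real v" by simp
  then have "real n \<le> (4 * real v - 10) / 3" by simp
  then show ?thesis by (rule le_nat_floor)
qed

lemma third_le_cyclic_size:
  assumes "4 \<le> v"
  shows "(if v mod 3 = 0 then (4 * real v - 21) / 3
          else if v mod 3 = 1 then (4 * real v - 13) / 3
          else (4 * real v - 17) / 3) \<le> real (4 * ((v - 4) div 3) + 1)"
proof -
  define n where "n = 4 * ((v - 4) div 3) + 1"
  have cast: "3 * real n + real c = 4 * real v" if "3 * n + c = 4 * v" for c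
    using arg_cong[OF that, of real] by simp
  have eqs: "v mod 3 = 0 \<Longrightarrow> 3 * n + 21 = 4 * v" "v mod 3 = 1 \<Longrightarrow> 3 * n + 13 = 4 * v"
    "v mod 3 = 2 \<Longrightarrow> 3 * n + 17 = 4 * v"
    using assms unfolding n_def by presburger+
  have "v mod 3 = 0 \<or> v mod 3 = 1 \<or> v mod 3 = 2" by arith
  then show ?thesis
  proof (elim disjE)
    assume h: "v mod 3 = 0"
    with cast[OF eqs(1)[OF h]] show ?thesis unfolding n_def[symmetric] by simp
  next
    assume h: "v mod 3 = 1"
    with cast[OF eqs(2)[OF h]] show ?thesis unfolding n_def[symmetric] by simp
  next
    assume h: "v mod 3 = 2"
    with cast[OF eqs(3)[OF h]] show ?thesis unfolding n_def[symmetric] by simp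
  qed
qed

theorem theorem4p4:
  fixes v :: nat
  assumes "v \<ge> 240"
  shows "beta 4 v 4 \<le> nat \<lfloor>(4 * real v - 10) / 3\<rfloor>
     \<and> real (beta 4 v 4) \<ge>
         (if v mod 3 = 0 then (4 * real v - 21) / 3
          else if v mod 3 = 1 then (4 * real v - 13) / 3
          else (4 * real v - 17) / 3)"
proof
  define m where "m = (v - 4) div 3"
  have m: "6 < m" "9 < m" "4 + 3 * m \<le> v" using assms unfolding m_def by auto
  have cyclic: "packing {..<v} 4 (cyclic_family m)" "max_ppc_size (cyclic_family m) 4"
    using cyclic_family_packing[OF m(1,3)] cyclic_family_max_ppc_size[OF m(2)] .
  obtain \<B> where \<B>: "packing {..<v} 4 \<B>" "max_ppc_size \<B> 4" "beta 4 v 4 = card \<B>"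
    by (rule beta_attained[OF cyclic])
  show "beta 4 v 4 \<le> nat \<lfloor>(4 * real v - 10) / 3\<rfloor>"
    unfolding \<B>(3) by (rule le_nat_floor_third[OF packing_4_4_card_bound[OF \<B>(1,2) assms]])
  have "4 * m + 1 \<le> beta 4 v 4"
    using card_le_beta[OF cyclic] unfolding card_cyclic_family .
  then have lower: "real (4 * m + 1) \<le> real (beta 4 v 4)" by (simp only: of_nat_le_iff)
  have "4 \<le> v" using assms by simp
  from third_le_cyclic_size[OF this, folded m_def] lower show "real (beta 4 v 4) \<ge>
         (if v mod 3 = 0 then (4 * real v - 21) / 3
          else if v mod 3 = 1 then (4 * real v - 13) / 3
          else (4 * real v - 17) / 3)"
    by linarith
qed

end
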